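(* Let $\mathfrak{C}=(U,M,I,N,J)$ be a formal decision context and $E\subseteq M$. Then $E$ is an I-consistent set of $\mathfrak{C}$ if and only if the following holds: for any $(Y,D)\in L(\mathfrak{C}_N)$ and $(O,C)\in L_O(\mathfrak{C}_M)$ with $O\subseteq Y$, there exists $(O',C')\in L_O(U,E,I_E)$ such that $O\subseteq O'\subseteq Y$.
   Context: Formal context $(U,M,I)$: $U$ and $M$ are finite nonempty sets and $I\subseteq U\times M$. For $O\subseteq U$ and $C\subseteq M$ define: - $O^{\uparrow}=\{a\in M\mid \forall x\in O\,((x,a)\in I)\}$ and $C^{\downarrow}=\{x\in U\mid \forall a\in C\,((x,a)\in I)\}$; - $O^{\square}=\{a\in M\mid \forall x\in U\,((x,a)\in I\Rightarrow x\in O)\}$ and $C^{\lozenge}=\{x\in U\mid \exists a\in C\,((x,a)\in I)\}$. A formal concept is a pair $(O,C)$ with $O^\uparrow=C$ and $C^\downarrow=O$ (set $L$). An object-oriented concept is a pair $(O,C)$ with $O^\square=C$ and $C^\lozenge=O$ (set $L_O$). Standing assumption: contexts are canonical, i.e. for all $x\in U$ and $a\in M$ we have $\{x\}^\uparrow\notin\{\emptyset,M\}$ and $\{a\}^\downarrow\notin\{\emptyset,U\}$. A formal decision context $\mathfrak{C}=(U,M,I,N,J)$ has conditional context $\mathfrak{C}_M=(U,M,I)$ and decision context $\mathfrak{C}_N=(U,N,J)$, with $M\cap N=\emptyset$. For $E\subseteq M$, put $I_E=I\cap(U\times E)$; the subcontext is $\mathfrak{C}(E)=(U,E,I_E,N,J)$,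 with conditional context $(U,E,I_E)$. An I-decision rule of a formal decision context is $(O,C)\rightarrow(Y,D)$ with $(O,C)$ an object-oriented concept of its conditional context, $(Y,D)\in L$ of its decision context, $O\subseteq Y$, $O\ne\emptyset$ and $Y\ne U$; the set of these is $\mathfrak{R}_I(\cdot)$. For $(O,C)\rightarrow(Y,D)\in\mathfrak{R}_I(\mathfrak{C}(E))$ and $(O_1,C_1)\rightarrow(Y_1,D_1)\in\mathfrak{R}_I(\mathfrak{C})$, the first implies the second iff $O_1\subseteq O\subseteq Y\subseteq Y_1$. $E$ is an I-consistent set of $\mathfrak{C}$ if every rule in $\mathfrak{R}_I(\mathfrak{C})$ is implied by some rule in $\mathfrak{R}_I(\mathfrak{C}(E))$. *)

theory Defs
  imports Main
begin

definition fc_up :: "'a set \<Rightarrow> 'b set \<Rightarrow> ('a \<times> 'b) set \<Rightarrow> 'a set \<Rightarrow> 'b set" where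
  "fc_up U M I X = {a \<in> M. \<forall>x\<in>X. (x, a) \<in> I}"

definition fc_down :: "'a set \<Rightarrow> 'b set \<Rightarrow> ('a \<times> 'b) set \<Rightarrow> 'b set \<Rightarrow> 'a set" where
  "fc_down U M I C = {x \<in> U. \<forall>a\<in>C. (x, a) \<in> I}"

definition fc_box :: "'a set \<Rightarrow> 'b set \<Rightarrow> ('a \<times> 'b) set \<Rightarrow> 'a set \<Rightarrow> 'b set" where
  "fc_box U M I X = {a \<in> M. \<forall>x\<in>U. (x, a) \<in> I \<longrightarrow> x \<in> X}"

definition fc_dia :: "'a set \<Rightarrow> 'b set \<Rightarrow> ('a \<times> 'b) set \<Rightarrow> 'b set \<Rightarrow> 'a set" where
  "fc_dia U M I C = {x \<in> U. \<exists>a\<in>C. (x, a) \<in> I}"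

definition concepts :: "'a set \<Rightarrow> 'b set \<Rightarrow> ('a \<times> 'b) set \<Rightarrow> ('a set \<times> 'b set) set" where
  "concepts U M I = {(X, C). X \<subseteq> U \<and> C \<subseteq> M \<and> fc_up U M I X = C \<and> fc_down U M I C = X}"

definition oo_concepts :: "'a set \<Rightarrow> 'b set \<Rightarrow> ('a \<times> 'b) set \<Rightarrow> ('a set \<times> 'b set) set" where
  "oo_concepts U M I = {(X, C). X \<subseteq> U \<and> C \<subseteq> M \<and> fc_box U M I X = C \<and> fc_dia U M I C = X}"

definition formal_context :: "'a set \<Rightarrow> 'b set \<Rightarrow> ('a \<times> 'b) set \<Rightarrow> bool" where
  "formal_context U M I \<longleftrightarrow> finite U \<and> finite M \<and> U \<noteq> {} \<and> M \<noteq> {} \<and> I \<subseteq> U \<times> M"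

definition canonical :: "'a set \<Rightarrow> 'b set \<Rightarrow> ('a \<times> 'b) set \<Rightarrow> bool" where
  "canonical U M I \<longleftrightarrow>
     (\<forall>x\<in>U. fc_up U M I {x} \<noteq> {} \<and> fc_up U M I {x} \<noteq> M) \<and>
     (\<forall>a\<in>M. fc_down U M I {a} \<noteq> {} \<and> fc_down U M I {a} \<noteq> U)"

text \<open>Formal decision context (U,M,I,N,J), with the standing canonicity assumption
  on the conditional and decision contexts.\<close>
definition formal_decision_context ::
  "'a set \<Rightarrow> 'b set \<Rightarrow> ('a \<times> 'b) set \<Rightarrow> 'b set \<Rightarrow> ('a \<times> 'b) set \<Rightarrow> bool" where
  "formal_decision_context U M I N J \<longleftrightarrow>
     formal_context U M I \<and> formal_context U N J \<and> M \<inter> N = {} \<and>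
     canonical U M I \<and> canonical U N J"

definition restrict_rel :: "'a set \<Rightarrow> ('a \<times> 'b) set \<Rightarrow> 'b set \<Rightarrow> ('a \<times> 'b) set" where
  "restrict_rel U I E = I \<inter> (U \<times> E)"

definition I_rules ::
  "'a set \<Rightarrow> 'b set \<Rightarrow> ('a \<times> 'b) set \<Rightarrow> 'b set \<Rightarrow> ('a \<times> 'b) set
   \<Rightarrow> (('a set \<times> 'b set) \<times> ('a set \<times> 'b set)) set" where
  "I_rules U M I N J = {((X, C), (Y, D)). (X, C) \<in> oo_concepts U M I \<and> (Y, D) \<in> concepts U N J
      \<and> X \<subseteq> Y \<and> X \<noteq> {} \<and> Y \<noteq> U}"

definition rule_implies ::
  "(('a set \<times> 'b set) \<times> ('a set \<times> 'b set)) \<Rightarrow> (('a set \<times> 'b set) \<times> ('a set \<times> 'b set)) \<Rightarrow> bool" where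
  "rule_implies r r1 \<longleftrightarrow> fst (fst r1) \<subseteq> fst (fst r) \<and> fst (fst r) \<subseteq> fst (snd r)
      \<and> fst (snd r) \<subseteq> fst (snd r1)"

definition I_consistent ::
  "'a set \<Rightarrow> 'b set \<Rightarrow> ('a \<times> 'b) set \<Rightarrow> 'b set \<Rightarrow> ('a \<times> 'b) set \<Rightarrow> 'b set \<Rightarrow> bool" where
  "I_consistent U M I N J E \<longleftrightarrow>
     (\<forall>r1 \<in> I_rules U M I N J. \<exists>r \<in> I_rules U E (restrict_rel U I E) N J. rule_implies r r1)"

end

theory Submission
  imports Defs
begin

text \<open>A rule of the subcontext implying \<open>(O, C) \<rightarrow> (Y, D)\<close> may always be taken with decision
  part \<open>(Y, D)\<close> itself, so I-consistency only asks for an object-oriented concept of the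
  subcontext squeezed between \<open>O\<close> and \<open>Y\<close>. The side condition \<open>O \<noteq> {}\<close> of decision rules is
  immaterial: by canonicity every attribute is possessed by some object, which makes
  \<open>({}, {})\<close> an object-oriented concept of the subcontext.\<close>

lemma canonical_restrict_rel_attribute_has_object:
  assumes "canonical U M I" and "E \<subseteq> M" and "a \<in> E"
  shows "\<exists>x\<in>U. (x, a) \<in> restrict_rel U I E"
proof -
  have "fc_down U M I {a} \<noteq> {}"
    using assms unfolding canonical_def by blast
  with assms(3) show ?thesis
    unfolding fc_down_def restrict_rel_def by blast
qed

lemma empty_in_oo_concepts:
  assumes "\<And>a. a \<in> M \<Longrightarrow> \<exists>x\<in>U. (x, a) \<in> I"
  shows "({}, {}) \<in> oo_concepts U M I"
proof -
  have "fc_box U M I {} = {}"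
    using assms unfolding fc_box_def by blast
  then show ?thesis
    unfolding oo_concepts_def fc_dia_def by simp
qed

lemma I_consistent_iff_oo_concept_between:
  "I_consistent U M I N J E \<longleftrightarrow>
    (\<forall>Y D X C. (Y, D) \<in> concepts U N J \<longrightarrow> (X, C) \<in> oo_concepts U M I \<longrightarrow> X \<subseteq> Y \<longrightarrow> Y \<noteq> U \<longrightarrow>
       X \<noteq> {} \<longrightarrow> (\<exists>X' C'. (X', C') \<in> oo_concepts U E (restrict_rel U I E) \<and> X \<subseteq> X' \<and> X' \<subseteq> Y))"
  (is "_ \<longleftrightarrow> (\<forall>Y D X C. _ \<longrightarrow> _ \<longrightarrow> _ \<longrightarrow> _ \<longrightarrow> _ \<longrightarrow> ?between X Y)")
proof
  assume consistent: "I_consistent U M I N J E"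
  show "\<forall>Y D X C. (Y, D) \<in> concepts U N J \<longrightarrow> (X, C) \<in> oo_concepts U M I \<longrightarrow> X \<subseteq> Y \<longrightarrow>
    Y \<noteq> U \<longrightarrow> X \<noteq> {} \<longrightarrow> ?between X Y"
  proof (intro allI impI)
    fix Y D X C
    assume "(Y, D) \<in> concepts U N J" "(X, C) \<in> oo_concepts U M I" "X \<subseteq> Y" "Y \<noteq> U" "X \<noteq> {}"
    then have "((X, C), (Y, D)) \<in> I_rules U M I N J"
      unfolding I_rules_def by blast
    then obtain X' C' Y' D' where
      "((X', C'), (Y', D')) \<in> I_rules U E (restrict_rel U I E) N J"
      and "rule_implies ((X', C'), (Y', D')) ((X, C), (Y, D))"
      using consistent unfolding I_consistent_def by fast
    then have "(X', C') \<in> oo_concepts U E (restrict_rel U I E)" "X \<subseteq> X'" "X' \<subseteq> Y"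
      unfolding I_rules_def rule_implies_def by auto
    then show "?between X Y"
      by blast
  qed
next
  assume between: "\<forall>Y D X C. (Y, D) \<in> concepts U N J \<longrightarrow> (X, C) \<in> oo_concepts U M I \<longrightarrow>
    X \<subseteq> Y \<longrightarrow> Y \<noteq> U \<longrightarrow> X \<noteq> {} \<longrightarrow> ?between X Y"
  show "I_consistent U M I N J E"
    unfolding I_consistent_def
  proof (intro ballI)
    fix r1
    assume r1: "r1 \<in> I_rules U M I N J"
    obtain X C Y D where r1_eq: "r1 = ((X, C), (Y, D))"
      by (metis prod.collapse)
    have rule: "(Y, D) \<in> concepts U N J" "(X, C) \<in> oo_concepts U M I" "X \<subseteq> Y" "Y \<noteq> U" "X \<noteq> {}"
      using r1 unfolding r1_eq I_rules_def by auto
    with between obtain X' C' where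
      X'C': "(X', C') \<in> oo_concepts U E (restrict_rel U I E)" "X \<subseteq> X'" "X' \<subseteq> Y"
      by blast
    with rule have "((X', C'), (Y, D)) \<in> I_rules U E (restrict_rel U I E) N J"
      unfolding I_rules_def by auto
    moreover have "rule_implies ((X', C'), (Y, D)) r1"
      unfolding r1_eq rule_implies_def using X'C' by simp
    ultimately show "\<exists>r \<in> I_rules U E (restrict_rel U I E) N J. rule_implies r r1"
      by blast
  qed
qed

theorem theorem3p11:
  fixes U :: "'a set" and M N E :: "'b set" and I J :: "('a \<times> 'b) set"
  assumes "formal_decision_context U M I N J"
    and "E \<subseteq> M"
  shows "I_consistent U M I N J E \<longleftrightarrow>
    (\<forall>Y D X C. (Y, D) \<in> concepts U N J \<longrightarrow> (X, C) \<in> oo_concepts U M I \<longrightarrow> X \<subseteq> Y \<longrightarrow> Y \<noteq> U \<longrightarrow>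
       (\<exists>X' C'. (X', C') \<in> oo_concepts U E (restrict_rel U I E) \<and> X \<subseteq> X' \<and> X' \<subseteq> Y))"
proof -
  have "canonical U M I"
    using assms(1) unfolding formal_decision_context_def by simp
  with assms(2) have "({}, {}) \<in> oo_concepts U E (restrict_rel U I E)"
    by (intro empty_in_oo_concepts canonical_restrict_rel_attribute_has_object)
  then have "\<exists>X' C'. (X', C') \<in> oo_concepts U E (restrict_rel U I E) \<and> {} \<subseteq> X' \<and> X' \<subseteq> Y"
    for Y :: "'a set"
    by blast
  then show ?thesis
    unfolding I_consistent_iff_oo_concept_between by metis
qed

end
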